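(* Let $f\in\mathbb{R}[x,y]$ be irreducible and suppose $X=V(f)\subseteq\mathbb{R}^2$ is compact and connected. Let $q\in X$ be a singular point ($\frac{\partial f}{\partial x}(q)=\frac{\partial f}{\partial y}(q)=0$) and let $B(q)$ be an open ball centered at $q$ containing no other singular point of $X$ and such that $\frac{\partial f}{\partial x}(p)\neq0$ and $\frac{\partial f}{\partial y}(p)\neq0$ for every $p\in X\cap\overline{B(q)}$, $p\neq q$. Let $P$ be a connected component of $X\cap(B(q)\setminus\{q\})$ whose two endpoints (the points of $\overline{P}\setminus P$) are $q$ and a point of $\partial B(q)$. Then $P$ is the graph of a real analytic function $g$ on an open interval $I=(a,b)$ with $-\infty<a<b<\infty$; moreover $g$ has no critical points and at most finitely many strict inflection points in $I$.
   Context: A strict inflection point of $g$ is a point of $I$ at which $g''$ changes sign (the concavity of $g$ changes). *)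

theory Defs
  imports "HOL-Analysis.Analysis" "HOL-Computational_Algebra.Polynomial"
begin

text \<open>A bivariate real polynomial f in R[x,y] is represented as an element of
  (R[x])[y], i.e. a polynomial in y whose coefficients are polynomials in x.
  This ring is isomorphic to R[x,y].\<close>

definition eval2 :: "real poly poly \<Rightarrow> real \<times> real \<Rightarrow> real" where
  "eval2 f p = poly (map_poly (\<lambda>c. poly c (fst p)) f) (snd p)"

definition pdx :: "real poly poly \<Rightarrow> real poly poly" where
  "pdx f = map_poly pderiv f"

definition pdy :: "real poly poly \<Rightarrow> real poly poly" where
  "pdy f = pderiv f"

definition zero_set :: "real poly poly \<Rightarrow> (real \<times> real) set" where
  "zero_set f = {p. eval2 f p = 0}"

definition singular_point :: "real poly poly \<Rightarrow> real \<times> real \<Rightarrow> bool" where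
  "singular_point f p \<longleftrightarrow> eval2 f p = 0 \<and> eval2 (pdx f) p = 0 \<and> eval2 (pdy f) p = 0"

definition real_analytic_on :: "(real \<Rightarrow> real) \<Rightarrow> real set \<Rightarrow> bool" where
  "real_analytic_on g I \<longleftrightarrow>
     (\<forall>x\<in>I. \<exists>d>0. \<exists>c::nat \<Rightarrow> real. \<forall>y. \<bar>y - x\<bar> < d \<longrightarrow> (\<lambda>n. c n * (y - x) ^ n) sums g y)"

definition strict_inflection :: "(real \<Rightarrow> real) \<Rightarrow> real set \<Rightarrow> real \<Rightarrow> bool" where
  "strict_inflection g I x \<longleftrightarrow> x \<in> I \<and>
     (\<exists>d>0. {x - d<..<x + d} \<subseteq> I \<and>
        ((\<forall>t\<in>{x - d<..<x}. deriv (deriv g) t > 0) \<and> (\<forall>t\<in>{x<..<x + d}. deriv (deriv g) t < 0) \<or>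
         (\<forall>t\<in>{x - d<..<x}. deriv (deriv g) t < 0) \<and> (\<forall>t\<in>{x<..<x + d}. deriv (deriv g) t > 0)))"

end

theory Submission
  imports
    Defs
    "HOL-Computational_Algebra.Polynomial_Factorial"
    "HOL-Computational_Algebra.Field_as_Ring"
    "HOL-Complex_Analysis.Cauchy_Integral_Formula"
begin

(* Since f_y does not vanish on P, the implicit function theorem makes P locally a graph. We prove
   it in holomorphic form for the complexified polynomial, by iterating the contraction
   w - F(z, w) / F_w(z0, w0) uniformly in z; so the local solutions are holomorphic, and conjugation
   symmetry together with uniqueness keeps them real on the real axis. Continuing local graphs along
   segments shows that the component P is a single graph over the open set fst ` P, which is a
   bounded interval since P is connected and lies in the ball. Differentiating f(x, g x) = 0 gives
   f_x + f_y g' = 0, so g' never vanishes, and f_y^3 g'' = -H(x, g x) for an explicit polynomial H.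
   If f divides H, then g'' vanishes identically and there are no strict inflection points;
   otherwise irreducibility of f yields a Bezout identity A f + B H = d(x) with d \<noteq> 0, which
   confines the inflection points to the roots of d. *)

lemma dist_Pair_Pair_le: "dist (a, b) (c, d) \<le> dist a c + dist b d"
  by (simp add: dist_Pair_Pair sqrt_sum_squares_le_sum)

lemma dist_of_real_of_real: "dist (of_real x :: 'a::real_normed_algebra_1) (of_real y) = dist x y"
  by (metis dist_norm norm_of_real of_real_diff dist_real_def)

(* Evaluation of an element of A[x][y], generic in A so that it also serves the complexification. *)
definition poly2 :: "'a::comm_ring_1 poly poly \<Rightarrow> 'a \<Rightarrow> 'a \<Rightarrow> 'a" where
  "poly2 F x y = poly (poly F [:y:]) x"

lemma poly2_pCons [simp]: "poly2 (pCons c F) x y = poly c x + y * poly2 F x y"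
  and poly2_0 [simp]: "poly2 0 x y = 0"
  and poly2_add [simp]: "poly2 (F + G) x y = poly2 F x y + poly2 G x y"
  and poly2_diff [simp]: "poly2 (F - G) x y = poly2 F x y - poly2 G x y"
  and poly2_mult [simp]: "poly2 (F * G) x y = poly2 F x y * poly2 G x y"
  and poly2_const [simp]: "poly2 [:c:] x y = poly c x"
  and poly2_power [simp]: "poly2 (F ^ n) x y = poly2 F x y ^ n"
  by (simp_all add: poly2_def)

lemma eval2_eq_poly2: "eval2 f p = poly2 f (fst p) (snd p)"
  by (induction f rule: pCons_induct) (simp_all add: eval2_def map_poly_pCons)

lemma has_field_derivative_poly2_y:
  fixes F :: "'a::real_normed_field poly poly"
  shows "((\<lambda>y. poly2 F x y) has_field_derivative poly2 (pderiv F) x y) (at y within S)"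
  by (induction F rule: pCons_induct)
     (auto intro!: derivative_eq_intros simp: pderiv_pCons algebra_simps)

lemma has_field_derivative_poly2_along:
  fixes F :: "'a::real_normed_field poly poly"
  assumes "(v has_field_derivative v') (at t within S)"
  shows "((\<lambda>s. poly2 F s (v s)) has_field_derivative
           poly2 (map_poly pderiv F) t (v t) + poly2 (pderiv F) t (v t) * v') (at t within S)"
  by (induction F rule: pCons_induct)
     (auto intro!: derivative_eq_intros assms simp: pderiv_pCons map_poly_pCons algebra_simps)

lemma continuous_poly2 [continuous_intros]:
  fixes F :: "'a::real_normed_field poly poly"
  assumes "continuous G u" "continuous G v"
  shows "continuous G (\<lambda>s. poly2 F (u s) (v s))"
  by (induction F rule: pCons_induct) (auto intro!: assms continuous_intros)

lemma holomorphic_on_poly2 [holomorphic_intros]: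
  assumes "u holomorphic_on A" "v holomorphic_on A"
  shows "(\<lambda>z. poly2 F (u z) (v z)) holomorphic_on A"
  by (induction F rule: pCons_induct) (auto intro!: assms holomorphic_intros)

definition complexify :: "real poly poly \<Rightarrow> complex poly poly" where
  "complexify f = map_poly (map_poly of_real) f"

lemma complexify_0 [simp]: "complexify 0 = 0"
  by (simp add: complexify_def)

lemma complexify_pCons [simp]: "complexify (pCons c f) = pCons (map_poly of_real c) (complexify f)"
  by (simp add: complexify_def map_poly_pCons)

lemma poly_map_poly_of_real:
  "poly (map_poly of_real c) (of_real x) = (of_real (poly c x) :: 'a::{real_algebra_1,comm_ring_1})"
  by (induction c) (simp_all add: map_poly_pCons)

lemma cnj_poly_map_poly_of_real:
  "cnj (poly (map_poly of_real c) z) = poly (map_poly of_real c) (cnj z)"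
  by (rule poly_cnj_real) (simp add: coeff_map_poly)

lemma complexify_add: "complexify (f + g) = complexify f + complexify g"
  by (rule poly_eqI) (simp add: complexify_def coeff_map_poly poly_eq_iff)

lemma pderiv_complexify: "pderiv (complexify f) = complexify (pderiv f)"
  by (induction f rule: pCons_induct) (simp_all add: pderiv_pCons complexify_add)

lemma poly2_complexify_cnj: "poly2 (complexify f) (cnj z) (cnj w) = cnj (poly2 (complexify f) z w)"
  by (induction f rule: pCons_induct) (simp_all add: cnj_poly_map_poly_of_real)

lemma poly2_complexify_of_real:
  "poly2 (complexify f) (of_real x) (of_real y) = of_real (poly2 f x y)"
  by (induction f rule: pCons_induct) (simp_all add: poly_map_poly_of_real)

section \<open>A holomorphic implicit function theorem\<close>

lemma contraction_iterates:
  assumes maps: "\<And>w. w \<in> S \<Longrightarrow> f w \<in> S"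
    and contr: "\<And>w w'. w \<in> S \<Longrightarrow> w' \<in> S \<Longrightarrow> dist (f w) (f w') \<le> k * dist w w'"
    and "0 \<le> k" "x \<in> S"
  shows "(f ^^ n) x \<in> S" and "dist ((f ^^ Suc n) x) ((f ^^ n) x) \<le> k ^ n * dist (f x) x"
proof -
  have iter_in: "(f ^^ m) x \<in> S" for m
    by (induction m) (simp_all add: maps \<open>x \<in> S\<close>)
  then show "(f ^^ n) x \<in> S" .
  show "dist ((f ^^ Suc n) x) ((f ^^ n) x) \<le> k ^ n * dist (f x) x"
  proof (induction n)
    case (Suc n)
    have "dist ((f ^^ Suc (Suc n)) x) ((f ^^ Suc n) x) \<le> k * dist ((f ^^ Suc n) x) ((f ^^ n) x)"
      using contr[OF iter_in[of "Suc n"] iter_in[of n]] by simp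
    also have "\<dots> \<le> k * (k ^ n * dist (f x) x)"
      using Suc \<open>0 \<le> k\<close> by (rule mult_left_mono)
    finally show ?case
      by simp
  qed simp
qed

lemma uniform_limit_geometric_increments:
  fixes I :: "nat \<Rightarrow> 'a \<Rightarrow> 'b::banach"
  assumes "0 \<le> k" "k < 1" and step: "\<And>n z. z \<in> A \<Longrightarrow> dist (I (Suc n) z) (I n z) \<le> k ^ n * M"
  obtains L where "uniform_limit A I L sequentially"
proof -
  have "uniform_limit A (\<lambda>m z. \<Sum>n<m. I (Suc n) z - I n z) (\<lambda>z. \<Sum>n. I (Suc n) z - I n z)
      sequentially"
  proof (rule Weierstrass_m_test)
    show "norm (I (Suc n) z - I n z) \<le> k ^ n * M" if "z \<in> A" for n z
      using step[OF that] by (simp add: dist_norm)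
    show "summable (\<lambda>n. k ^ n * M)"
      using assms(1,2) by (simp add: summable_mult2)
  qed
  then have "uniform_limit A (\<lambda>m z. I 0 z + (\<Sum>n<m. I (Suc n) z - I n z))
      (\<lambda>z. I 0 z + (\<Sum>n. I (Suc n) z - I n z)) sequentially"
    by (intro uniform_limit_add uniform_limit_const)
  moreover have "I 0 z + (\<Sum>n<m. I (Suc n) z - I n z) = I m z" for m z
    by (simp add: sum_lessThan_telescope[of "\<lambda>n. I n z"])
  ultimately show ?thesis
    using that by simp
qed

lemma fixed_point_of_convergent_iterates:
  fixes f :: "'a::t2_space \<Rightarrow> 'a"
  assumes "closed C" "continuous_on C f" and iter: "\<And>n. (f ^^ n) x \<in> C"
    and lim: "(\<lambda>n. (f ^^ n) x) \<longlonglongrightarrow> l"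
  shows "l \<in> C \<and> f l = l"
proof
  show "l \<in> C"
    by (rule Lim_in_closed_set[OF \<open>closed C\<close> _ _ lim]) (simp_all add: iter)
  then have "(\<lambda>n. f ((f ^^ n) x)) \<longlonglongrightarrow> f l"
    by (rule continuous_on_tendsto_compose[OF \<open>continuous_on C f\<close> lim]) (simp add: iter)
  moreover have "(\<lambda>n. f ((f ^^ n) x)) \<longlonglongrightarrow> l"
    using LIMSEQ_Suc[OF lim] by simp
  ultimately show "f l = l"
    by (rule LIMSEQ_unique)
qed

lemma uniform_fixed_point_of_contractions:
  fixes T :: "'a \<Rightarrow> 'b::banach \<Rightarrow> 'b"
  assumes "0 \<le> k" "k < 1"
    and contr: "\<And>z w w'. z \<in> A \<Longrightarrow> w \<in> cball w0 \<rho> \<Longrightarrow> w' \<in> cball w0 \<rho> \<Longrightarrow>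
                  dist (T z w) (T z w') \<le> k * dist w w'"
    and start: "\<And>z. z \<in> A \<Longrightarrow> dist (T z w0) w0 \<le> (1 - k) * \<rho>"
  obtains W where "uniform_limit A (\<lambda>n z. (T z ^^ n) w0) W sequentially"
    "\<forall>z\<in>A. W z \<in> cball w0 \<rho> \<and> T z (W z) = W z"
proof -
  have w0_in: "w0 \<in> cball w0 \<rho>" if "z \<in> A" for z
  proof -
    have "0 \<le> (1 - k) * \<rho>"
      using zero_le_dist start[OF that] by (rule order_trans)
    then show ?thesis
      using \<open>k < 1\<close> by (simp add: zero_le_mult_iff)
  qed
  have maps: "T z w \<in> cball w0 \<rho>" if "z \<in> A" "w \<in> cball w0 \<rho>" for z w
  proof -
    have "dist w0 (T z w) \<le> dist (T z w0) w0 + dist (T z w0) (T z w)"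
      by (rule dist_triangle3)
    also have "\<dots> \<le> (1 - k) * \<rho> + k * dist w0 w"
      using start[OF that(1)] contr[OF that(1) w0_in[OF that(1)] that(2)] by (rule add_mono)
    also have "\<dots> \<le> (1 - k) * \<rho> + k * \<rho>"
      using that(2) \<open>0 \<le> k\<close> by (simp add: mult_left_mono)
    finally show ?thesis
      by (simp add: algebra_simps)
  qed
  have iter_in: "(T z ^^ n) w0 \<in> cball w0 \<rho>" if "z \<in> A" for z n
    by (rule contraction_iterates(1)[OF maps[OF that] contr[OF that] \<open>0 \<le> k\<close> w0_in[OF that]])
  have iter_step: "dist ((T z ^^ Suc n) w0) ((T z ^^ n) w0) \<le> k ^ n * dist (T z w0) w0"
    if "z \<in> A" for z n
    by (rule contraction_iterates(2)[OF maps[OF that] contr[OF that] \<open>0 \<le> k\<close> w0_in[OF that]])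
  obtain W where unif: "uniform_limit A (\<lambda>n z. (T z ^^ n) w0) W sequentially"
  proof (rule uniform_limit_geometric_increments[OF \<open>0 \<le> k\<close> \<open>k < 1\<close>])
    show "dist ((T z ^^ Suc n) w0) ((T z ^^ n) w0) \<le> k ^ n * ((1 - k) * \<rho>)" if "z \<in> A" for n z
    proof -
      have "dist ((T z ^^ Suc n) w0) ((T z ^^ n) w0) \<le> k ^ n * dist (T z w0) w0"
        by (rule iter_step[OF that])
      also have "\<dots> \<le> k ^ n * ((1 - k) * \<rho>)"
        using start[OF that] \<open>0 \<le> k\<close> by (simp add: mult_left_mono)
      finally show ?thesis .
    qed
  qed
  moreover have "\<forall>z\<in>A. W z \<in> cball w0 \<rho> \<and> T z (W z) = W z"
  proof
    fix z assume "z \<in> A"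
    have "k-lipschitz_on (cball w0 \<rho>) (T z)"
      by (rule lipschitz_onI[OF contr[OF \<open>z \<in> A\<close>] \<open>0 \<le> k\<close>])
    then show "W z \<in> cball w0 \<rho> \<and> T z (W z) = W z"
      using fixed_point_of_convergent_iterates[OF closed_cball lipschitz_on_continuous_on iter_in]
        tendsto_uniform_limitI[OF unif] \<open>z \<in> A\<close> by blast
  qed
  ultimately show ?thesis
    by (rule that)
qed

lemma holomorphic_fixed_point_of_contractions:
  fixes T :: "complex \<Rightarrow> complex \<Rightarrow> complex"
  assumes "open A" "0 \<le> k" "k < 1"
    and contr: "\<And>z w w'. z \<in> A \<Longrightarrow> w \<in> cball w0 \<rho> \<Longrightarrow> w' \<in> cball w0 \<rho> \<Longrightarrow>
                  dist (T z w) (T z w') \<le> k * dist w w'"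
    and start: "\<And>z. z \<in> A \<Longrightarrow> dist (T z w0) w0 \<le> (1 - k) * \<rho>"
    and hol: "\<And>h. h holomorphic_on A \<Longrightarrow> (\<lambda>z. T z (h z)) holomorphic_on A"
  obtains W where "W holomorphic_on A" "\<forall>z\<in>A. W z \<in> cball w0 \<rho> \<and> T z (W z) = W z"
proof -
  obtain W where unif: "uniform_limit A (\<lambda>n z. (T z ^^ n) w0) W sequentially"
    and W: "\<forall>z\<in>A. W z \<in> cball w0 \<rho> \<and> T z (W z) = W z"
    by (rule uniform_fixed_point_of_contractions[OF \<open>0 \<le> k\<close> \<open>k < 1\<close> contr start])
  have "W holomorphic_on A"
  proof (rule holomorphic_uniform_sequence[OF \<open>open A\<close>])
    show "(\<lambda>z. (T z ^^ n) w0) holomorphic_on A" for n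
      by (induction n) (simp_all add: hol)
    fix z assume "z \<in> A"
    then obtain d where "d > 0" "cball z d \<subseteq> A"
      using \<open>open A\<close> open_contains_cball by blast
    then show "\<exists>d>0. cball z d \<subseteq> A \<and> uniform_limit (cball z d) (\<lambda>n z. (T z ^^ n) w0) W sequentially"
      using uniform_limit_on_subset[OF unif] by blast
  qed
  then show ?thesis
    using W by (rule that)
qed

lemma poly2_newton_map_contraction:
  fixes F :: "complex poly poly" and z0 w0 :: complex
  defines "c \<equiv> poly2 (pderiv F) z0 w0"
  assumes "c \<noteq> 0"
  obtains \<eta> where "\<eta> > 0" "\<And>z w w'. dist z z0 < \<eta> \<Longrightarrow> w \<in> ball w0 \<eta> \<Longrightarrow> w' \<in> ball w0 \<eta> \<Longrightarrow>
      dist (w - poly2 F z w / c) (w' - poly2 F z w' / c) \<le> 1/2 * dist w w'"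
proof -
  have "isCont (\<lambda>p. poly2 (pderiv F) (fst p) (snd p)) (z0, w0)"
    by (intro continuous_intros)
  moreover have "norm c / 2 > 0"
    using \<open>c \<noteq> 0\<close> by simp
  ultimately obtain \<eta> where "\<eta> > 0"
    and \<eta>: "\<And>p. dist p (z0, w0) < \<eta> \<Longrightarrow> dist (poly2 (pderiv F) (fst p) (snd p)) c < norm c / 2"
    unfolding continuous_at_eps_delta c_def by (metis fst_conv snd_conv)
  have slope: "norm (1 - poly2 (pderiv F) z w / c) \<le> 1/2"
    if "dist z z0 < \<eta>/2" "w \<in> ball w0 (\<eta>/2)" for z w
  proof -
    have "dist (z, w) (z0, w0) < \<eta>"
      using that dist_Pair_Pair_le[of z w z0 w0] by (simp add: dist_commute)
    then have "norm (c - poly2 (pderiv F) z w) \<le> norm c / 2"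
      using \<eta>[of "(z, w)"] by (simp add: dist_norm norm_minus_commute)
    then show ?thesis
      using \<open>c \<noteq> 0\<close> by (simp add: norm_divide field_simps)
  qed
  have "norm ((w - poly2 F z w / c) - (w' - poly2 F z w' / c)) \<le> 1/2 * norm (w - w')"
    if "dist z z0 < \<eta>/2" "w \<in> ball w0 (\<eta>/2)" "w' \<in> ball w0 (\<eta>/2)" for z w w'
  proof (rule field_differentiable_bound[OF convex_ball _ _ that(2,3)])
    show "((\<lambda>w. w - poly2 F z w / c) has_field_derivative 1 - poly2 (pderiv F) z u / c)
        (at u within ball w0 (\<eta>/2))" for u
      by (intro DERIV_diff DERIV_ident DERIV_cdivide has_field_derivative_poly2_y)
  qed (use slope that in auto)
  then show ?thesis
    using that[of "\<eta>/2"] \<open>\<eta> > 0\<close> by (simp add: dist_norm)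
qed

lemma poly2_implicit_holomorphic:
  fixes F :: "complex poly poly"
  assumes zero: "poly2 F z0 w0 = 0" and regular: "poly2 (pderiv F) z0 w0 \<noteq> 0" and "\<epsilon> > 0"
  obtains \<delta> \<rho> W where "\<delta> > 0" "0 < \<rho>" "\<rho> < \<epsilon>" "W holomorphic_on ball z0 \<delta>"
    "\<forall>z\<in>ball z0 \<delta>. W z \<in> cball w0 \<rho> \<and> poly2 F z (W z) = 0"
    "\<forall>z\<in>ball z0 \<delta>. \<forall>w\<in>cball w0 \<rho>. poly2 F z w = 0 \<longrightarrow> w = W z"
proof -
  define c where "c = poly2 (pderiv F) z0 w0"
  have "c \<noteq> 0"
    using regular by (simp add: c_def)
  \<comment> \<open>Newton's map with frozen slope: its fixed points are the zeros of \<open>F z\<close>.\<close>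
  define T where "T = (\<lambda>z w. w - poly2 F z w / c)"
  obtain \<eta> where "\<eta> > 0" and newton: "\<And>z w w'. dist z z0 < \<eta> \<Longrightarrow> w \<in> ball w0 \<eta> \<Longrightarrow> w' \<in> ball w0 \<eta> \<Longrightarrow>
      dist (T z w) (T z w') \<le> 1/2 * dist w w'"
    using poly2_newton_map_contraction[OF regular] unfolding T_def c_def by blast
  define \<rho> where "\<rho> = min \<eta> \<epsilon> / 2"
  have "0 < \<rho>" "\<rho> < \<epsilon>" "\<rho> < \<eta>"
    using \<open>\<eta> > 0\<close> \<open>\<epsilon> > 0\<close> by (auto simp: \<rho>_def)
  have "isCont (\<lambda>z. poly2 F z w0 / c) z0"
    by (intro continuous_intros \<open>c \<noteq> 0\<close>)
  moreover have "\<rho>/2 > 0"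
    using \<open>0 < \<rho>\<close> by simp
  ultimately obtain \<delta>0 where "\<delta>0 > 0" and \<delta>0: "\<And>z. dist z z0 < \<delta>0 \<Longrightarrow> norm (poly2 F z w0 / c) < \<rho>/2"
    unfolding continuous_at_eps_delta zero by (metis diff_zero dist_norm div_0)
  define \<delta> where "\<delta> = min \<delta>0 \<eta>"
  have "\<delta> > 0"
    using \<open>\<delta>0 > 0\<close> \<open>\<eta> > 0\<close> by (simp add: \<delta>_def)
  have contr: "dist (T z w) (T z w') \<le> 1/2 * dist w w'"
    if "z \<in> ball z0 \<delta>" "w \<in> cball w0 \<rho>" "w' \<in> cball w0 \<rho>" for z w w'
    using newton that \<open>\<rho> < \<eta>\<close> by (simp add: \<delta>_def dist_commute)
  have start: "dist (T z w0) w0 \<le> (1 - 1/2) * \<rho>" if "z \<in> ball z0 \<delta>" for z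
    using \<delta>0[of z] that by (simp add: T_def dist_norm \<delta>_def norm_minus_commute)
  have hol: "(\<lambda>z. T z (h z)) holomorphic_on ball z0 \<delta>" if "h holomorphic_on ball z0 \<delta>" for h
    unfolding T_def by (intro holomorphic_intros that \<open>c \<noteq> 0\<close>)
  obtain W where W: "W holomorphic_on ball z0 \<delta>"
    and fixed: "\<forall>z\<in>ball z0 \<delta>. W z \<in> cball w0 \<rho> \<and> T z (W z) = W z"
    by (rule holomorphic_fixed_point_of_contractions[OF open_ball _ _ contr start hol]) simp_all
  show ?thesis
  proof (rule that[OF \<open>\<delta> > 0\<close> \<open>0 < \<rho>\<close> \<open>\<rho> < \<epsilon>\<close> W]; intro ballI impI)
    show "W z \<in> cball w0 \<rho> \<and> poly2 F z (W z) = 0" if "z \<in> ball z0 \<delta>" for z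
      using fixed that \<open>c \<noteq> 0\<close> by (simp add: T_def)
    show "w = W z" if "z \<in> ball z0 \<delta>" "w \<in> cball w0 \<rho>" "poly2 F z w = 0" for z w
    proof -
      have "dist w (W z) \<le> 1/2 * dist w (W z)"
        using contr[OF that(1,2), of "W z"] fixed that \<open>c \<noteq> 0\<close> by (simp add: T_def)
      then show ?thesis
        by simp
    qed
  qed
qed

lemma real_poly2_implicit_holomorphic:
  fixes f :: "real poly poly"
  assumes zero: "poly2 f x0 y0 = 0" and regular: "poly2 (pderiv f) x0 y0 \<noteq> 0" and "\<epsilon> > 0"
  obtains \<delta> \<rho> W where "\<delta> > 0" "0 < \<rho>" "\<rho> < \<epsilon>" "W holomorphic_on ball (of_real x0) \<delta>"
    "\<forall>x\<in>ball x0 \<delta>. dist (Re (W (of_real x))) y0 \<le> \<rho> \<and> poly2 f x (Re (W (of_real x))) = 0"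
    "\<forall>x\<in>ball x0 \<delta>. \<forall>y. dist y y0 \<le> \<rho> \<longrightarrow> poly2 f x y = 0 \<longrightarrow> y = Re (W (of_real x))"
proof -
  define F where "F = complexify f"
  have "poly2 F (of_real x0) (of_real y0) = 0" "poly2 (pderiv F) (of_real x0) (of_real y0) \<noteq> 0"
    using zero regular by (simp_all add: F_def pderiv_complexify poly2_complexify_of_real)
  then obtain \<delta> \<rho> W where "\<delta> > 0" "0 < \<rho>" "\<rho> < \<epsilon>" and W: "W holomorphic_on ball (of_real x0) \<delta>"
    and root: "\<forall>z\<in>ball (of_real x0) \<delta>. W z \<in> cball (of_real y0) \<rho> \<and> poly2 F z (W z) = 0"
    and unique: "\<forall>z\<in>ball (of_real x0) \<delta>. \<forall>w\<in>cball (of_real y0) \<rho>. poly2 F z w = 0 \<longrightarrow> w = W z"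
    using \<open>\<epsilon> > 0\<close> by (rule poly2_implicit_holomorphic)
  have x_in: "of_real x \<in> ball (of_real x0 :: complex) \<delta>" if "x \<in> ball x0 \<delta>" for x
    using that by (simp add: dist_of_real_of_real)
  \<comment> \<open>Conjugation fixes the real axis and the coefficients of F, so uniqueness makes W real there.\<close>
  have real: "W (of_real x) = of_real (Re (W (of_real x)))" if "x \<in> ball x0 \<delta>" for x
  proof -
    have "dist (of_real y0) (cnj (W (of_real x))) = dist (of_real y0) (W (of_real x))"
      by (metis complex_cnj_complex_of_real complex_cnj_diff complex_mod_cnj dist_norm)
    then have "cnj (W (of_real x)) \<in> cball (of_real y0) \<rho>"
      using root x_in[OF that] by simp
    moreover have "poly2 F (of_real x) (cnj (W (of_real x))) = 0"
      using poly2_complexify_cnj[of f "of_real x" "W (of_real x)"] root x_in[OF that]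
      by (simp add: F_def)
    ultimately have "cnj (W (of_real x)) = W (of_real x)"
      using unique x_in[OF that] by blast
    then show ?thesis
      by (simp add: complex_eq_iff)
  qed
  show ?thesis
  proof (rule that[OF \<open>\<delta> > 0\<close> \<open>0 < \<rho>\<close> \<open>\<rho> < \<epsilon>\<close> W]; intro ballI allI impI)
    fix x assume x: "x \<in> ball x0 \<delta>"
    show "dist (Re (W (of_real x))) y0 \<le> \<rho> \<and> poly2 f x (Re (W (of_real x))) = 0"
      using root x_in[OF x] real[OF x]
      by (metis (no_types, lifting) F_def dist_of_real_of_real mem_cball dist_commute
          of_real_eq_0_iff poly2_complexify_of_real)
    fix y assume "dist y y0 \<le> \<rho>" "poly2 f x y = 0"
    then have "of_real y = W (of_real x)"
      using unique x_in[OF x]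
      by (simp add: dist_of_real_of_real dist_commute F_def poly2_complexify_of_real)
    then show "y = Re (W (of_real x))"
      by (metis Re_complex_of_real)
  qed
qed

section \<open>Sets that are locally graphs\<close>

definition local_graph ::
    "(real \<times> real) set \<Rightarrow> real \<times> real \<Rightarrow> real \<Rightarrow> real \<Rightarrow> (real \<Rightarrow> real) \<Rightarrow> bool" where
  "local_graph S p \<delta> \<rho> w \<longleftrightarrow> 0 < \<delta> \<and> 0 < \<rho> \<and> continuous_on (ball (fst p) \<delta>) w \<and> w (fst p) = snd p \<and>
     (\<forall>x\<in>ball (fst p) \<delta>. (x, w x) \<in> S) \<and>
     (\<forall>x\<in>ball (fst p) \<delta>. \<forall>y. \<bar>y - snd p\<bar> < \<rho> \<longrightarrow> (x, y) \<in> S \<longrightarrow> y = w x)"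

lemma zero_set_local_graph:
  fixes f :: "real poly poly"
  assumes "open U" "p \<in> zero_set f \<inter> U" "eval2 (pdy f) p \<noteq> 0"
  obtains \<delta> \<rho> W where "local_graph (zero_set f \<inter> U) p \<delta> \<rho> (\<lambda>x. Re (W (of_real x)))"
    "W holomorphic_on ball (of_real (fst p)) \<delta>"
proof -
  obtain x0 y0 where p: "p = (x0, y0)"
    by fastforce
  obtain \<epsilon> where "\<epsilon> > 0" and \<epsilon>: "ball (x0, y0) \<epsilon> \<subseteq> U"
    using assms(1,2) p open_contains_ball by blast
  have "poly2 f x0 y0 = 0" "poly2 (pderiv f) x0 y0 \<noteq> 0" "\<epsilon>/2 > 0"
    using assms(2,3) p \<open>\<epsilon> > 0\<close> by (simp_all add: zero_set_def eval2_eq_poly2 pdy_def)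
  then obtain \<delta> \<rho> W where "\<delta> > 0" "0 < \<rho>" "\<rho> < \<epsilon>/2" and W: "W holomorphic_on ball (of_real x0) \<delta>"
    and root: "\<forall>x\<in>ball x0 \<delta>. dist (Re (W (of_real x))) y0 \<le> \<rho> \<and> poly2 f x (Re (W (of_real x))) = 0"
    and unique: "\<forall>x\<in>ball x0 \<delta>. \<forall>y. dist y y0 \<le> \<rho> \<longrightarrow> poly2 f x y = 0 \<longrightarrow> y = Re (W (of_real x))"
    by (rule real_poly2_implicit_holomorphic)
  define \<delta>' where "\<delta>' = min \<delta> (\<epsilon>/2)"
  have "local_graph (zero_set f \<inter> U) (x0, y0) \<delta>' \<rho> (\<lambda>x. Re (W (of_real x)))"
    unfolding local_graph_def fst_conv snd_conv
  proof (intro conjI ballI allI impI)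
    show "0 < \<delta>'" "0 < \<rho>"
      using \<open>\<delta> > 0\<close> \<open>\<epsilon> > 0\<close> \<open>0 < \<rho>\<close> by (simp_all add: \<delta>'_def)
    show "continuous_on (ball x0 \<delta>') (\<lambda>x. Re (W (of_real x)))"
      by (intro continuous_intros continuous_on_compose2[OF holomorphic_on_imp_continuous_on[OF W]])
         (auto simp: \<delta>'_def dist_of_real_of_real)
    show "Re (W (of_real x0)) = y0"
      using unique[rule_format, of x0 y0] \<open>\<delta> > 0\<close> \<open>0 < \<rho>\<close> \<open>poly2 f x0 y0 = 0\<close> by simp
  next
    fix x assume x: "x \<in> ball x0 \<delta>'"
    then have "x \<in> ball x0 \<delta>"
      by (simp add: \<delta>'_def)
    have "dist (x, Re (W (of_real x))) (x0, y0) < \<epsilon>"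
      using x root \<open>x \<in> ball x0 \<delta>\<close> \<open>\<rho> < \<epsilon>/2\<close> dist_Pair_Pair_le[of x "Re (W (of_real x))" x0 y0]
      by (fastforce simp: \<delta>'_def dist_commute)
    then show "(x, Re (W (of_real x))) \<in> zero_set f \<inter> U"
      using \<epsilon> root \<open>x \<in> ball x0 \<delta>\<close> by (auto simp: dist_commute zero_set_def eval2_eq_poly2)
    fix y assume "\<bar>y - y0\<bar> < \<rho>" "(x, y) \<in> zero_set f \<inter> U"
    then show "y = Re (W (of_real x))"
      using unique \<open>x \<in> ball x0 \<delta>\<close> by (simp add: dist_real_def zero_set_def eval2_eq_poly2)
  qed
  moreover have "W holomorphic_on ball (of_real x0) \<delta>'"
    using W by (rule holomorphic_on_subset) (simp add: \<delta>'_def subset_ball)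
  ultimately show ?thesis
    using that p by simp
qed

lemma local_graph_sections_eventually_agree:
  assumes "local_graph S (t, h1 t) \<delta> \<rho> w" "h1 t = h2 t"
    and lim1: "(h1 \<longlongrightarrow> h1 t) (at t within T)" and lim2: "(h2 \<longlongrightarrow> h2 t) (at t within T)"
    and S1: "\<And>s. s \<in> T \<Longrightarrow> (s, h1 s) \<in> S" and S2: "\<And>s. s \<in> T \<Longrightarrow> (s, h2 s) \<in> S"
  shows "eventually (\<lambda>s. h1 s = h2 s) (at t within T)"
proof -
  have "0 < \<delta>" "0 < \<rho>"
    and unique: "\<And>s y. s \<in> ball t \<delta> \<Longrightarrow> \<bar>y - h1 t\<bar> < \<rho> \<Longrightarrow> (s, y) \<in> S \<Longrightarrow> y = w s"
    using assms(1) unfolding local_graph_def by auto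
  have "eventually (\<lambda>s. s \<in> ball t \<delta> \<and> s \<in> T) (at t within T)"
    by (rule eventually_at_ball[OF \<open>0 < \<delta>\<close>])
  moreover have "eventually (\<lambda>s. dist (h1 s) (h1 t) < \<rho>) (at t within T)"
    using lim1 \<open>0 < \<rho>\<close> by (rule tendstoD)
  moreover have "eventually (\<lambda>s. dist (h2 s) (h1 t) < \<rho>) (at t within T)"
    using lim2 \<open>0 < \<rho>\<close> unfolding \<open>h1 t = h2 t\<close> by (rule tendstoD)
  ultimately show ?thesis
  proof eventually_elim
    case (elim s)
    then show ?case
      using unique[of s "h1 s"] unique[of s "h2 s"] S1 S2 by (simp add: dist_real_def)
  qed
qed

lemma local_graph_sections_agree:
  assumes graphs: "\<And>p. p \<in> S \<Longrightarrow> \<exists>\<delta> \<rho> w. local_graph S p \<delta> \<rho> w"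
    and "connected T" "continuous_on T h1" "continuous_on T h2"
    and S1: "\<And>t. t \<in> T \<Longrightarrow> (t, h1 t) \<in> S" and S2: "\<And>t. t \<in> T \<Longrightarrow> (t, h2 t) \<in> S"
    and "a \<in> T" "b \<in> T" "h1 a = h2 a"
  shows "h1 b = h2 b"
proof -
  have "(h1 a = h2 a) = (h1 b = h2 b)"
  proof (rule connected_local_const[where f = "\<lambda>t. h1 t = h2 t"], fact+, intro ballI)
    fix t assume "t \<in> T"
    have lim1: "(h1 \<longlongrightarrow> h1 t) (at t within T)" and lim2: "(h2 \<longlongrightarrow> h2 t) (at t within T)"
      using \<open>continuous_on T h1\<close> \<open>continuous_on T h2\<close> \<open>t \<in> T\<close> by (simp_all add: continuous_on_def)
    show "eventually (\<lambda>s. (h1 t = h2 t) = (h1 s = h2 s)) (at t within T)"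
    proof (cases "h1 t = h2 t")
      case True
      obtain \<delta> \<rho> w where "local_graph S (t, h1 t) \<delta> \<rho> w"
        using graphs S1 \<open>t \<in> T\<close> by blast
      then have "eventually (\<lambda>s. h1 s = h2 s) (at t within T)"
        using True lim1 lim2 S1 S2 by (rule local_graph_sections_eventually_agree)
      then show ?thesis
        by eventually_elim (use True in simp)
    next
      case False
      have "((\<lambda>s. h1 s - h2 s) \<longlongrightarrow> h1 t - h2 t) (at t within T)"
        by (intro tendsto_diff lim1 lim2)
      then have "eventually (\<lambda>s. h1 s - h2 s \<noteq> 0) (at t within T)"
        using False by (intro tendsto_imp_eventually_ne) auto
      then show ?thesis
        by eventually_elim (use False in auto)
    qed
  qed
  then show ?thesis
    using \<open>h1 a = h2 a\<close> by simp
qed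

definition continuations :: "(real \<times> real) set \<Rightarrow> real \<times> real \<Rightarrow> (real \<times> real) set" where
  "continuations S p0 = {(x, h x) | x h. continuous_on (closed_segment (fst p0) x) h \<and>
      h (fst p0) = snd p0 \<and>
      (\<forall>t\<in>closed_segment (fst p0) x. (t, h t) \<in> S)}"

lemma continuations_extend:
  assumes graphs: "\<And>p. p \<in> S \<Longrightarrow> \<exists>\<delta> \<rho> w. local_graph S p \<delta> \<rho> w"
    and L: "local_graph S p \<delta> \<rho> w" and x': "x' \<in> ball (fst p) \<delta>" and x'': "x'' \<in> ball (fst p) \<delta>"
    and "(x', w x') \<in> continuations S p0"
  shows "(x'', w x'') \<in> continuations S p0"
proof -
  obtain h where h: "continuous_on (closed_segment (fst p0) x') h" "h (fst p0) = snd p0"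
    "h x' = w x'"
    "\<And>t. t \<in> closed_segment (fst p0) x' \<Longrightarrow> (t, h t) \<in> S"
    using \<open>(x', w x') \<in> continuations S p0\<close> unfolding continuations_def by auto
  define I where "I = closed_segment (fst p0) x'"
  define J where "J = closed_segment x' x''"
  have "J \<subseteq> ball (fst p) \<delta>"
    unfolding J_def using x' x'' by (rule closed_segment_subset) simp
  then have w: "continuous_on J w" "\<And>t. t \<in> J \<Longrightarrow> (t, w t) \<in> S"
    using L continuous_on_subset unfolding local_graph_def by blast+
  have agree: "h t = w t" if "t \<in> I \<inter> J" for t
  proof (rule local_graph_sections_agree[OF graphs, of "I \<inter> J" h w x' t])
    show "connected (I \<inter> J)"
      by (simp add: I_def J_def convex_connected convex_Int)
    show "continuous_on (I \<inter> J) h" "continuous_on (I \<inter> J) w"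
      using h(1) w(1) by (auto simp: I_def intro: continuous_on_subset)
  qed (use that h w in \<open>auto simp: I_def J_def\<close>)
  define h' where "h' t = (if t \<in> I then h t else w t)" for t
  have "continuous_on (I \<union> J) h'"
    unfolding h'_def using agree h(1) w(1) by (intro continuous_on_cases) (auto simp: I_def J_def)
  moreover have seg: "closed_segment (fst p0) x'' \<subseteq> I \<union> J"
    by (auto simp: I_def J_def closed_segment_eq_real_ivl split: if_splits)
  ultimately have "continuous_on (closed_segment (fst p0) x'') h'"
    by (rule continuous_on_subset)
  moreover have "h' (fst p0) = snd p0" "h' x'' = w x''"
    using h agree by (auto simp: h'_def I_def J_def)
  moreover have "(t, h' t) \<in> S" if "t \<in> closed_segment (fst p0) x''" for t
    using that seg h w by (auto simp: h'_def I_def)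
  ultimately show ?thesis
    unfolding continuations_def by (auto intro!: exI[of _ x''] exI[of _ h'])
qed

lemma component_subset_continuations:
  assumes graphs: "\<And>p. p \<in> S \<Longrightarrow> \<exists>\<delta> \<rho> w. local_graph S p \<delta> \<rho> w"
    and P: "P \<in> components S" and "p0 \<in> P"
  shows "P \<subseteq> continuations S p0"
proof
  fix q assume "q \<in> P"
  have "P \<subseteq> S"
    using P in_components_subset by blast
  have "(p0 \<in> continuations S p0) = (q \<in> continuations S p0)"
  proof (rule connected_local_const[OF in_components_connected[OF P] \<open>p0 \<in> P\<close> \<open>q \<in> P\<close>], intro ballI)
    fix p assume "p \<in> P"
    obtain \<delta> \<rho> w where L: "local_graph S p \<delta> \<rho> w"
      using graphs \<open>p \<in> P\<close> \<open>P \<subseteq> S\<close> by blast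
    then have "0 < \<delta>" "0 < \<rho>" and p_eq: "p = (fst p, w (fst p))"
      and unique: "\<And>x y. x \<in> ball (fst p) \<delta> \<Longrightarrow> \<bar>y - snd p\<bar> < \<rho> \<Longrightarrow> (x, y) \<in> S \<Longrightarrow> y = w x"
      unfolding local_graph_def by (auto simp: prod_eq_iff)
    have "eventually (\<lambda>p'. p' \<in> ball p (min \<delta> \<rho>) \<and> p' \<in> P) (at p within P)"
      by (rule eventually_at_ball) (use \<open>0 < \<delta>\<close> \<open>0 < \<rho>\<close> in simp)
    then show "eventually (\<lambda>p'. (p \<in> continuations S p0) = (p' \<in> continuations S p0))
        (at p within P)"
    proof eventually_elim
      case (elim p')
      then have x': "fst p' \<in> ball (fst p) \<delta>" and "\<bar>snd p' - snd p\<bar> < \<rho>"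
        using dist_fst_le[of p p'] dist_snd_le[of p p'] by (auto simp: dist_real_def)
      then have "p' = (fst p', w (fst p'))"
        using unique[OF x', of "snd p'"] elim \<open>P \<subseteq> S\<close> by (auto simp: prod_eq_iff)
      moreover have "fst p \<in> ball (fst p) \<delta>"
        using \<open>0 < \<delta>\<close> by simp
      ultimately show ?case
        using continuations_extend[OF graphs L] x' p_eq by metis
    qed
  qed
  moreover have "p0 \<in> continuations S p0"
    unfolding continuations_def using \<open>p0 \<in> P\<close> \<open>P \<subseteq> S\<close>
    by (auto intro!: exI[of _ "\<lambda>_. snd p0"] exI[of _ "fst p0"])
  ultimately show "q \<in> continuations S p0"
    by simp
qed

lemma component_of_local_graphs:
  assumes graphs: "\<And>p. p \<in> S \<Longrightarrow> \<exists>\<delta> \<rho> w. local_graph S p \<delta> \<rho> w"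
    and P: "P \<in> components S"
  obtains g where "P = (\<lambda>x. (x, g x)) ` fst ` P"
    "\<And>p \<delta> \<rho> w. p \<in> P \<Longrightarrow> local_graph S p \<delta> \<rho> w \<Longrightarrow>
      ball (fst p) \<delta> \<subseteq> fst ` P \<and> (\<forall>x\<in>ball (fst p) \<delta>. g x = w x)"
proof
  \<comment> \<open>A continuation from (x, y1) back to abscissa x lives on a one-point segment.\<close>
  have single_valued: "y1 = y2" if "(x, y1) \<in> P" "(x, y2) \<in> P" for x y1 y2
    using component_subset_continuations[OF graphs P that(1)] that(2)
    unfolding continuations_def by auto
  define g where "g x = (THE y. (x, y) \<in> P)" for x
  have g: "g x = y" if "(x, y) \<in> P" for x y
    unfolding g_def using that single_valued by blast
  show "P = (\<lambda>x. (x, g x)) ` fst ` P"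
    using g by force
  fix p \<delta> \<rho> w assume "p \<in> P" and L: "local_graph S p \<delta> \<rho> w"
  have "(\<lambda>x. (x, w x)) ` ball (fst p) \<delta> \<subseteq> P"
  proof (rule components_maximal[OF P])
    show "connected ((\<lambda>x. (x, w x)) ` ball (fst p) \<delta>)"
      using L unfolding local_graph_def
      by (intro connected_continuous_image continuous_on_Pair continuous_on_id) auto
    show "(\<lambda>x. (x, w x)) ` ball (fst p) \<delta> \<subseteq> S"
      using L unfolding local_graph_def by auto
    have "p \<in> (\<lambda>x. (x, w x)) ` ball (fst p) \<delta>"
      using L unfolding local_graph_def by (auto simp: image_iff prod_eq_iff)
    then show "P \<inter> (\<lambda>x. (x, w x)) ` ball (fst p) \<delta> \<noteq> {}"
      using \<open>p \<in> P\<close> by blast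
  qed
  then show "ball (fst p) \<delta> \<subseteq> fst ` P \<and> (\<forall>x\<in>ball (fst p) \<delta>. g x = w x)"
    using g by force
qed

definition locally_Re_holomorphic :: "(real \<Rightarrow> real) \<Rightarrow> real set \<Rightarrow> bool" where
  "locally_Re_holomorphic g J \<longleftrightarrow> (\<forall>x\<in>J. \<exists>\<delta>>0. \<exists>W. W holomorphic_on ball (of_real x) \<delta> \<and>
     (\<forall>y\<in>ball x \<delta>. g y = Re (W (of_real y))))"

lemma has_real_derivative_Re_holomorphic:
  assumes W: "W holomorphic_on ball (of_real x) \<delta>" and g: "\<forall>y\<in>ball x \<delta>. g y = Re (W (of_real y))"
    and s: "s \<in> ball x \<delta>"
  shows "(g has_real_derivative Re (deriv W (of_real s))) (at s)"
proof -
  have "(W has_field_derivative deriv W (of_real s)) (at (of_real s))"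
    using W s by (intro holomorphic_derivI[OF W open_ball]) (simp add: dist_of_real_of_real)
  then have "((\<lambda>y. Re (W (of_real y))) has_real_derivative Re (deriv W (of_real s))) (at s)"
    by (intro has_field_derivative_Re has_vector_derivative_real_field)
  then show ?thesis
    by (rule has_field_derivative_transform_within_open[OF _ open_ball s]) (use g in simp)
qed

lemma locally_Re_holomorphic_has_real_derivative:
  assumes "locally_Re_holomorphic g J" "x \<in> J"
  shows "(g has_real_derivative deriv g x) (at x)"
proof -
  obtain \<delta> W where "\<delta> > 0" "W holomorphic_on ball (of_real x) \<delta>"
    "\<forall>y\<in>ball x \<delta>. g y = Re (W (of_real y))"
    using assms unfolding locally_Re_holomorphic_def by blast
  then have "(g has_real_derivative Re (deriv W (of_real x))) (at x)"
    by (intro has_real_derivative_Re_holomorphic) auto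
  then show ?thesis
    by (simp add: DERIV_imp_deriv)
qed

lemma locally_Re_holomorphic_deriv:
  assumes "locally_Re_holomorphic g J"
  shows "locally_Re_holomorphic (deriv g) J"
  unfolding locally_Re_holomorphic_def
proof
  fix x assume "x \<in> J"
  then obtain \<delta> W where "\<delta> > 0" and W: "W holomorphic_on ball (of_real x) \<delta>"
    and g: "\<forall>y\<in>ball x \<delta>. g y = Re (W (of_real y))"
    using assms unfolding locally_Re_holomorphic_def by blast
  have "deriv g y = Re (deriv W (of_real y))" if "y \<in> ball x \<delta>" for y
    using has_real_derivative_Re_holomorphic[OF W g that] by (rule DERIV_imp_deriv)
  then show "\<exists>\<delta>>0. \<exists>W. W holomorphic_on ball (of_real x) \<delta> \<and>
      (\<forall>y\<in>ball x \<delta>. deriv g y = Re (W (of_real y)))"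
    using \<open>\<delta> > 0\<close> holomorphic_deriv[OF W open_ball] by blast
qed

lemma locally_Re_holomorphic_imp_real_analytic:
  assumes "locally_Re_holomorphic g J"
  shows "real_analytic_on g J"
  unfolding real_analytic_on_def
proof
  fix x assume "x \<in> J"
  then obtain \<delta> W where "\<delta> > 0" and W: "W holomorphic_on ball (of_real x) \<delta>"
    and g: "\<forall>y\<in>ball x \<delta>. g y = Re (W (of_real y))"
    using assms unfolding locally_Re_holomorphic_def by blast
  define c where "c n = Re ((deriv ^^ n) W (of_real x) / fact n)" for n
  have "(\<lambda>n. c n * (y - x) ^ n) sums g y" if "\<bar>y - x\<bar> < \<delta>" for y
  proof -
    have "of_real y \<in> ball (of_real x :: complex) \<delta>"
      using that by (simp add: dist_of_real_of_real dist_real_def abs_minus_commute)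
    have "(fact n :: complex) = of_real (fact n)" for n
      by simp
    with sums_Re[OF holomorphic_power_series[OF W \<open>of_real y \<in> _\<close>]]
    have "(\<lambda>n. c n * (y - x) ^ n) sums Re (W (of_real y))"
      by (simp add: c_def del: of_real_fact flip: of_real_diff of_real_power)
    then show ?thesis
      using g that by (simp add: dist_real_def abs_minus_commute)
  qed
  then show "\<exists>d>0. \<exists>c. \<forall>y. \<bar>y - x\<bar> < d \<longrightarrow> (\<lambda>n. c n * (y - x) ^ n) sums g y"
    using \<open>\<delta> > 0\<close> by blast
qed

section \<open>Implicit differentiation and inflection points\<close>

lemma implicit_deriv_poly2:
  fixes f :: "real poly poly"
  assumes "open J" "t \<in> J" and zero: "\<And>x. x \<in> J \<Longrightarrow> poly2 f x (g x) = 0"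
    and g': "(g has_real_derivative deriv g t) (at t)"
  shows "poly2 (pdx f) t (g t) + poly2 (pdy f) t (g t) * deriv g t = 0"
proof -
  have "((\<lambda>s. poly2 f s (g s)) has_real_derivative
      poly2 (pdx f) t (g t) + poly2 (pdy f) t (g t) * deriv g t) (at t)"
    unfolding pdx_def pdy_def using g' by (rule has_field_derivative_poly2_along)
  moreover have "((\<lambda>s. poly2 f s (g s)) has_real_derivative 0) (at t)"
    by (rule has_field_derivative_transform_within_open[OF DERIV_const \<open>open J\<close> \<open>t \<in> J\<close>])
       (simp add: zero)
  ultimately show ?thesis
    by (rule DERIV_unique)
qed

text \<open>Along a branch \<open>y = g x\<close> of \<open>f = 0\<close>, implicit differentiation gives
  \<open>f\<^sub>y\<^sup>3 g'' = - inflection_poly f (x, g x)\<close>. The two mixed partials agree, but keeping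
  both spares us proving that.\<close>

definition inflection_poly :: "real poly poly \<Rightarrow> real poly poly" where
  "inflection_poly f = pdx (pdx f) * pdy f ^ 2 - (pdy (pdx f) + pdx (pdy f)) * pdx f * pdy f
    + pdy (pdy f) * pdx f ^ 2"

lemma implicit_second_deriv_poly2:
  fixes f :: "real poly poly"
  assumes "open J" "t \<in> J" and zero: "\<And>x. x \<in> J \<Longrightarrow> poly2 f x (g x) = 0"
    and g': "\<And>x. x \<in> J \<Longrightarrow> (g has_real_derivative deriv g x) (at x)"
    and g'': "(deriv g has_real_derivative deriv (deriv g) t) (at t)"
  shows "poly2 (inflection_poly f) t (g t) + poly2 (pdy f) t (g t) ^ 3 * deriv (deriv g) t = 0"
proof -
  define fx fy fxx fxy fyx fyy where "fx = poly2 (pdx f) t (g t)" and "fy = poly2 (pdy f) t (g t)"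
    and "fxx = poly2 (pdx (pdx f)) t (g t)" and "fxy = poly2 (pdy (pdx f)) t (g t)"
    and "fyx = poly2 (pdx (pdy f)) t (g t)" and "fyy = poly2 (pdy (pdy f)) t (g t)"
  have first: "poly2 (pdx f) x (g x) + poly2 (pdy f) x (g x) * deriv g x = 0" if "x \<in> J" for x
    using implicit_deriv_poly2[OF \<open>open J\<close> that zero g'[OF that]] .
  have "((\<lambda>s. poly2 (pdx f) s (g s) + poly2 (pdy f) s (g s) * deriv g s) has_real_derivative
      (fxx + fxy * deriv g t) + ((fyx + fyy * deriv g t) * deriv g t + deriv (deriv g) t * fy))
      (at t)"
    unfolding fxx_def fxy_def fyx_def fyy_def fy_def
      pdx_def[of "pdx f"] pdy_def[of "pdx f"] pdx_def[of "pdy f"] pdy_def[of "pdy f"]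
    by (intro DERIV_add DERIV_mult has_field_derivative_poly2_along g' g'' \<open>t \<in> J\<close>)
  moreover have "((\<lambda>s. poly2 (pdx f) s (g s) + poly2 (pdy f) s (g s) * deriv g s)
      has_real_derivative 0) (at t)"
    by (rule has_field_derivative_transform_within_open[OF DERIV_const \<open>open J\<close> \<open>t \<in> J\<close>])
       (simp add: first)
  ultimately have second:
    "(fxx + fxy * deriv g t) + ((fyx + fyy * deriv g t) * deriv g t + deriv (deriv g) t * fy) = 0"
    by (rule DERIV_unique)
  have "fx = - fy * deriv g t"
    using first[OF \<open>t \<in> J\<close>] by (simp add: fx_def fy_def)
  moreover have
    "poly2 (inflection_poly f) t (g t) = fxx * fy\<^sup>2 - (fxy + fyx) * fx * fy + fyy * fx\<^sup>2"
    by (simp add: inflection_poly_def fx_def fy_def fxx_def fxy_def fyx_def fyy_def)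
  ultimately have "poly2 (inflection_poly f) t (g t) + fy ^ 3 * deriv (deriv g) t
      = fy\<^sup>2 * ((fxx + fxy * deriv g t) + ((fyx + fyy * deriv g t) * deriv g t
          + deriv (deriv g) t * fy))"
    by algebra
  then show ?thesis
    using second by (simp add: fy_def)
qed

lemma strict_inflection_deriv2_eq_0:
  assumes "strict_inflection g I t" "isCont (deriv (deriv g)) t"
  shows "deriv (deriv g) t = 0"
proof -
  let ?g'' = "deriv (deriv g)"
  obtain d where "d > 0"
    and sign: "(\<forall>s\<in>{t - d<..<t}. ?g'' s > 0) \<and> (\<forall>s\<in>{t<..<t + d}. ?g'' s < 0) \<or>
       (\<forall>s\<in>{t - d<..<t}. ?g'' s < 0) \<and> (\<forall>s\<in>{t<..<t + d}. ?g'' s > 0)"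
    using assms(1) unfolding strict_inflection_def by blast
  have left: "(?g'' \<longlongrightarrow> ?g'' t) (at_left t)" and right: "(?g'' \<longlongrightarrow> ?g'' t) (at_right t)"
    using assms(2) by (simp_all add: isCont_def filterlim_at_split)
  have L: "eventually (\<lambda>s. s \<in> {t - d<..<t}) (at_left t)"
    unfolding eventually_at_left_field using \<open>d > 0\<close> by (intro exI[of _ "t - d"]) auto
  have R: "eventually (\<lambda>s. s \<in> {t<..<t + d}) (at_right t)"
    unfolding eventually_at_right_field using \<open>d > 0\<close> by (intro exI[of _ "t + d"]) auto
  from sign show ?thesis
  proof (elim disjE conjE)
    assume pos: "\<forall>s\<in>{t - d<..<t}. ?g'' s > 0" and neg: "\<forall>s\<in>{t<..<t + d}. ?g'' s < 0"
    have "0 \<le> ?g'' t"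
      by (rule tendsto_lowerbound[OF left eventually_mono[OF L] trivial_limit_at_left_real])
         (use pos in \<open>blast intro: less_imp_le\<close>)
    moreover have "?g'' t \<le> 0"
      by (rule tendsto_upperbound[OF right eventually_mono[OF R] trivial_limit_at_right_real])
         (use neg in \<open>blast intro: less_imp_le\<close>)
    ultimately show ?thesis
      by simp
  next
    assume neg: "\<forall>s\<in>{t - d<..<t}. ?g'' s < 0" and pos: "\<forall>s\<in>{t<..<t + d}. ?g'' s > 0"
    have "?g'' t \<le> 0"
      by (rule tendsto_upperbound[OF left eventually_mono[OF L] trivial_limit_at_left_real])
         (use neg in \<open>blast intro: less_imp_le\<close>)
    moreover have "0 \<le> ?g'' t"
      by (rule tendsto_lowerbound[OF right eventually_mono[OF R] trivial_limit_at_right_real])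
         (use pos in \<open>blast intro: less_imp_le\<close>)
    ultimately show ?thesis
      by simp
  qed
qed

lemma strict_inflection_imp_deriv2_nonzero:
  assumes "strict_inflection g I t"
  obtains s where "s \<in> I" "deriv (deriv g) s \<noteq> 0"
proof -
  obtain d where "d > 0" "{t - d<..<t + d} \<subseteq> I"
    and sign: "(\<forall>s\<in>{t - d<..<t}. deriv (deriv g) s > 0) \<and> (\<forall>s\<in>{t<..<t + d}. deriv (deriv g) s < 0) \<or>
       (\<forall>s\<in>{t - d<..<t}. deriv (deriv g) s < 0) \<and> (\<forall>s\<in>{t<..<t + d}. deriv (deriv g) s > 0)"
    using assms unfolding strict_inflection_def by blast
  have mem: "t - d/2 \<in> {t - d<..<t}"
    using \<open>d > 0\<close> by simp
  with sign have "deriv (deriv g) (t - d/2) > 0 \<or> deriv (deriv g) (t - d/2) < 0"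
    by blast
  moreover have "t - d/2 \<in> I"
    using mem \<open>{t - d<..<t + d} \<subseteq> I\<close> by auto
  ultimately show ?thesis
    using that by fastforce
qed

lemma finite_strict_inflections:
  assumes cont: "\<And>t. t \<in> I \<Longrightarrow> isCont (deriv (deriv g)) t"
    and zeros: "(\<forall>t\<in>I. deriv (deriv g) t = 0) \<or> finite {t\<in>I. deriv (deriv g) t = 0}"
  shows "finite {t. strict_inflection g I t}"
  using zeros
proof
  assume "\<forall>t\<in>I. deriv (deriv g) t = 0"
  then have "{t. strict_inflection g I t} = {}"
    using strict_inflection_imp_deriv2_nonzero by (metis empty_Collect_eq)
  then show ?thesis
    by simp
next
  assume "finite {t\<in>I. deriv (deriv g) t = 0}"
  moreover have "{t. strict_inflection g I t} \<subseteq> {t\<in>I. deriv (deriv g) t = 0}"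
    using strict_inflection_deriv2_eq_0 cont unfolding strict_inflection_def by blast
  ultimately show ?thesis
    by (rule finite_subset[rotated])
qed

section \<open>Bezout identities for irreducible polynomials\<close>

lemma field_poly_bezout:
  fixes p q :: "'a::field poly"
  assumes "irreducible p" "\<not> p dvd q"
  obtains a b where "a * p + b * q = 1"
proof -
  define I where "I = {a * p + b * q | a b. True}"
  have I_closed: "u * x + v * y \<in> I" if x: "x \<in> I" and y: "y \<in> I" for u v x y
  proof -
    obtain a b a' b' where "x = a * p + b * q" "y = a' * p + b' * q"
      using x y unfolding I_def by blast
    then have "u * x + v * y = (u * a + v * a') * p + (u * b + v * b') * q"
      by (simp add: algebra_simps)
    then show ?thesis
      unfolding I_def by blast
  qed
  have "p \<in> I" "q \<in> I"
    unfolding I_def by (force intro: exI[of _ 1] exI[of _ 0])+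
  \<comment> \<open>A nonzero element of least degree generates the ideal I.\<close>
  have "p \<noteq> 0"
    using \<open>irreducible p\<close> by auto
  then obtain m where m: "m \<in> I" "m \<noteq> 0" and least: "\<forall>x. x \<in> I \<and> x \<noteq> 0 \<longrightarrow> degree m \<le> degree x"
    using ex_has_least_nat[of "\<lambda>x. x \<in> I \<and> x \<noteq> 0" p degree] \<open>p \<in> I\<close> by blast
  have m_dvd: "m dvd x" if "x \<in> I" for x
  proof -
    have "x mod m \<in> I"
      using I_closed[OF that m(1), of 1 "- (x div m)"]
      by (simp add: minus_div_mult_eq_mod [symmetric] algebra_simps)
    then have "x mod m = 0"
      using least degree_mod_less[OF m(2), of x] by fastforce
    then show ?thesis
      by (simp add: mod_eq_0_iff_dvd)
  qed
  obtain k where "p = m * k"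
    using m_dvd[OF \<open>p \<in> I\<close>] by blast
  moreover have "\<not> is_unit k"
    using m_dvd[OF \<open>q \<in> I\<close>] \<open>\<not> p dvd q\<close> \<open>p = m * k\<close> by (metis dvd_mult_unit_iff dvd_refl dvd_trans)
  ultimately obtain u where "m * u = 1"
    using irreducibleD[OF \<open>irreducible p\<close>] by (metis dvdE)
  moreover obtain a b where "m = a * p + b * q"
    using m(1) unfolding I_def by blast
  ultimately have "(u * a) * p + (u * b) * q = 1"
    by (simp add: algebra_simps)
  then show ?thesis
    by (rule that)
qed

lemma fract_poly_clear_denominator:
  fixes p :: "'a::{factorial_semiring,semiring_Gcd,ring_gcd,idom_divide,semiring_gcd_mult_normalize}
    fract poly"
  obtains d q where "d \<noteq> 0" "smult (to_fract d) p = fract_poly q"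
proof -
  obtain c p' where p: "p = smult c (fract_poly p')"
    using content_decompose_fract by blast
  obtain n d where "d \<noteq> 0" "c = to_fract n / to_fract d"
    by (metis Fract_conv_to_fract snd_quot_of_fract_nonzero Fract_quot_of_fract)
  then have "smult (to_fract d) p = fract_poly (smult n p')"
    unfolding p by simp
  then show ?thesis
    using \<open>d \<noteq> 0\<close> that by blast
qed


lemma irreducible_poly_bezout_const:
  fixes f h :: "'a::{factorial_semiring,semiring_Gcd,ring_gcd,idom_divide,semiring_gcd_mult_normalize}
    poly"
  assumes "irreducible f" "degree f \<noteq> 0" "\<not> f dvd h"
  obtains a b d where "d \<noteq> 0" "a * f + b * h = [:d:]"
proof -
  have irr: "irreducible (fract_poly f)" and "content f = 1"
    using nonconst_poly_irreducible_iff[OF \<open>degree f \<noteq> 0\<close>] \<open>irreducible f\<close> by simp_all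
  have ndvd: "\<not> fract_poly f dvd fract_poly h"
    using fract_poly_dvdD \<open>content f = 1\<close> \<open>\<not> f dvd h\<close> by blast
  obtain a b where ab: "a * fract_poly f + b * fract_poly h = 1"
    by (rule field_poly_bezout[OF irr ndvd])
  obtain d1 a' where "d1 \<noteq> 0" and a': "smult (to_fract d1) a = fract_poly a'"
    by (rule fract_poly_clear_denominator)
  obtain d2 b' where "d2 \<noteq> 0" and b': "smult (to_fract d2) b = fract_poly b'"
    by (rule fract_poly_clear_denominator)
  have "fract_poly (smult d2 a' * f + smult d1 b' * h)
      = smult (to_fract d2) (smult (to_fract d1) a) * fract_poly f
        + smult (to_fract d1) (smult (to_fract d2) b) * fract_poly h"
    by (simp only: a' b' fract_poly_add fract_poly_mult fract_poly_smult)
  also have "\<dots> = smult (to_fract (d1 * d2)) (a * fract_poly f + b * fract_poly h)"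
    by (simp add: smult_add_right mult.commute)
  also have "\<dots> = fract_poly [:d1 * d2:]"
    by (simp add: ab map_poly_pCons)
  finally have "smult d2 a' * f + smult d1 b' * h = [:d1 * d2:]"
    by (simp only: fract_poly_eq_iff)
  then show ?thesis
    by (rule that[rotated]) (simp add: \<open>d1 \<noteq> 0\<close> \<open>d2 \<noteq> 0\<close>)
qed

lemma finite_common_zeros_poly2:
  fixes f h :: "real poly poly"
  assumes "irreducible f" "degree f \<noteq> 0" "\<not> f dvd h"
  shows "finite {x. \<exists>y. poly2 f x y = 0 \<and> poly2 h x y = 0}"
proof -
  obtain a b d where "d \<noteq> 0" and bezout: "a * f + b * h = [:d:]"
    by (rule irreducible_poly_bezout_const[OF assms])
  have "poly d x = 0" if "poly2 f x y = 0" "poly2 h x y = 0" for x y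
    using arg_cong[OF bezout, of "\<lambda>F. poly2 F x y"] that by simp
  then have "{x. \<exists>y. poly2 f x y = 0 \<and> poly2 h x y = 0} \<subseteq> {x. poly d x = 0}"
    by blast
  then show ?thesis
    using poly_roots_finite[OF \<open>d \<noteq> 0\<close>] by (rule finite_subset)
qed

section \<open>Branches of a regular real algebraic curve\<close>

lemma regular_component_Re_holomorphic_graph:
  fixes f :: "real poly poly"
  assumes "open U" and regular: "\<And>p. p \<in> zero_set f \<inter> U \<Longrightarrow> eval2 (pdy f) p \<noteq> 0"
    and P: "P \<in> components (zero_set f \<inter> U)"
  obtains g where "P = (\<lambda>x. (x, g x)) ` fst ` P" "open (fst ` P)"
    "locally_Re_holomorphic g (fst ` P)"
proof -
  let ?S = "zero_set f \<inter> U"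
  have graphs: "\<exists>\<delta> \<rho> W. local_graph ?S p \<delta> \<rho> (\<lambda>x. Re (W (of_real x))) \<and>
      W holomorphic_on ball (of_real (fst p)) \<delta>"
    if "p \<in> ?S" for p
    using zero_set_local_graph[OF \<open>open U\<close> that regular[OF that]] by metis
  have "\<exists>\<delta> \<rho> w. local_graph ?S p \<delta> \<rho> w" if "p \<in> ?S" for p
    using graphs[OF that] by blast
  then obtain g where P_eq: "P = (\<lambda>x. (x, g x)) ` fst ` P"
    and local: "\<And>p \<delta> \<rho> w. p \<in> P \<Longrightarrow> local_graph ?S p \<delta> \<rho> w \<Longrightarrow>
        ball (fst p) \<delta> \<subseteq> fst ` P \<and> (\<forall>x\<in>ball (fst p) \<delta>. g x = w x)"
    using component_of_local_graphs[OF _ P] by blast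
  have near: "\<exists>\<delta>>0. ball x \<delta> \<subseteq> fst ` P \<and>
      (\<exists>W. W holomorphic_on ball (of_real x) \<delta> \<and> (\<forall>y\<in>ball x \<delta>. g y = Re (W (of_real y))))"
    if "x \<in> fst ` P" for x
  proof -
    have "(x, g x) \<in> P"
      using that P_eq by force
    then have "(x, g x) \<in> ?S"
      using in_components_subset[OF P] by blast
    then obtain \<delta> \<rho> W where L: "local_graph ?S (x, g x) \<delta> \<rho> (\<lambda>x. Re (W (of_real x)))"
      and W: "W holomorphic_on ball (of_real x) \<delta>"
      using graphs by fastforce
    have "\<delta> > 0"
      using L by (simp add: local_graph_def)
    moreover have "ball x \<delta> \<subseteq> fst ` P \<and> (\<forall>y\<in>ball x \<delta>. g y = Re (W (of_real y)))"
      using local[OF \<open>(x, g x) \<in> P\<close> L] by simp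
    ultimately show ?thesis
      using W by blast
  qed
  have "open (fst ` P)"
    unfolding open_contains_ball using near by blast
  moreover have "locally_Re_holomorphic g (fst ` P)"
    unfolding locally_Re_holomorphic_def using near by blast
  ultimately show ?thesis
    using that[OF P_eq] by blast
qed

lemma branch_deriv_nonzero:
  fixes f :: "real poly poly"
  assumes "open J" "locally_Re_holomorphic g J" and zero: "\<And>x. x \<in> J \<Longrightarrow> poly2 f x (g x) = 0"
    and "\<And>x. x \<in> J \<Longrightarrow> poly2 (pdx f) x (g x) \<noteq> 0" and "x \<in> J"
  shows "deriv g x \<noteq> 0"
  using implicit_deriv_poly2[OF \<open>open J\<close> \<open>x \<in> J\<close> zero locally_Re_holomorphic_has_real_derivative]
    assms(2,4,5)
  by fastforce

lemma branch_finite_strict_inflections: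
  fixes f :: "real poly poly"
  assumes "open J" "locally_Re_holomorphic g J" and zero: "\<And>x. x \<in> J \<Longrightarrow> poly2 f x (g x) = 0"
    and regular: "\<And>x. x \<in> J \<Longrightarrow> poly2 (pdy f) x (g x) \<noteq> 0" and "irreducible f"
  shows "finite {x. strict_inflection g J x}"
proof (rule finite_strict_inflections)
  have g': "\<And>x. x \<in> J \<Longrightarrow> (g has_real_derivative deriv g x) (at x)"
    and g'': "\<And>x. x \<in> J \<Longrightarrow> (deriv g has_real_derivative deriv (deriv g) x) (at x)"
    and g''': "\<And>x. x \<in> J \<Longrightarrow> (deriv (deriv g) has_real_derivative deriv (deriv (deriv g)) x) (at x)"
    using locally_Re_holomorphic_has_real_derivative locally_Re_holomorphic_deriv assms(2) by blast+
  then show "isCont (deriv (deriv g)) x" if "x \<in> J" for x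
    using DERIV_isCont that by blast
  have second: "deriv (deriv g) x = 0 \<longleftrightarrow> poly2 (inflection_poly f) x (g x) = 0" if "x \<in> J" for x
    using implicit_second_deriv_poly2[OF \<open>open J\<close> that zero g' g''[OF that]] regular[OF that]
    by auto
  show "(\<forall>x\<in>J. deriv (deriv g) x = 0) \<or> finite {x \<in> J. deriv (deriv g) x = 0}"
  proof (cases "f dvd inflection_poly f \<or> J = {}")
    case True
    then show ?thesis
      using second zero by (auto elim!: dvdE)
  next
    case False
    then obtain x where "x \<in> J"
      by blast
    have "degree f \<noteq> 0"
    proof
      assume "degree f = 0"
      then obtain c where "f = [:c:]"
        by (rule degree_eq_zeroE)
      then show False
        using regular[OF \<open>x \<in> J\<close>] by (simp add: pdy_def)
    qed
    then have "finite {x. \<exists>y. poly2 f x y = 0 \<and> poly2 (inflection_poly f) x y = 0}"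
      using finite_common_zeros_poly2 \<open>irreducible f\<close> False by blast
    moreover have "{x \<in> J. deriv (deriv g) x = 0}
        \<subseteq> {x. \<exists>y. poly2 f x y = 0 \<and> poly2 (inflection_poly f) x y = 0}"
      using second zero by blast
    ultimately show ?thesis
      using finite_subset by blast
  qed
qed

lemma open_connected_bounded_eq_Ioo:
  fixes J :: "real set"
  assumes "open J" "connected J" "bounded J" "J \<noteq> {}"
  shows "J = {Inf J<..<Sup J}"
proof
  have bdd: "bdd_below J" "bdd_above J"
    using \<open>bounded J\<close> by (simp_all add: bounded_imp_bdd_below bounded_imp_bdd_above)
  have "Inf J \<notin> J"
    using bdd by (intro Inf_notin_open[OF \<open>open J\<close>, of "Inf J - 1"]) (auto dest: cInf_lower)
  moreover have "Sup J \<notin> J"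
    using bdd by (intro Sup_notin_open[OF \<open>open J\<close>, of "Sup J + 1"]) (auto dest: cSup_upper)
  ultimately show "J \<subseteq> {Inf J<..<Sup J}"
    using bdd by (force intro: cInf_lower cSup_upper simp: order.strict_iff_order)
  show "{Inf J<..<Sup J} \<subseteq> J"
  proof
    fix x assume "x \<in> {Inf J<..<Sup J}"
    then obtain u v where "u \<in> J" "u < x" "v \<in> J" "x < v"
      using cInf_less_iff[OF \<open>J \<noteq> {}\<close> bdd(1)] less_cSup_iff[OF \<open>J \<noteq> {}\<close> bdd(2)] by auto
    then show "x \<in> J"
      using \<open>connected J\<close> unfolding connected_iff_interval by (meson less_imp_le)
  qed
qed

lemma regular_component_analytic_graph:
  fixes f :: "real poly poly"
  assumes "irreducible f" "open U" "bounded U"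
    and regular: "\<And>p. p \<in> zero_set f \<inter> U \<Longrightarrow> eval2 (pdx f) p \<noteq> 0 \<and> eval2 (pdy f) p \<noteq> 0"
    and P: "P \<in> components (zero_set f \<inter> U)"
  obtains a b g where "a < b" "P = {(x, g x) | x. x \<in> {a<..<b}}" "real_analytic_on g {a<..<b}"
    "\<forall>x\<in>{a<..<b}. deriv g x \<noteq> 0" "finite {x. strict_inflection g {a<..<b} x}"
proof -
  obtain g where P_eq: "P = (\<lambda>x. (x, g x)) ` fst ` P" and "open (fst ` P)"
    and hol: "locally_Re_holomorphic g (fst ` P)"
    using regular_component_Re_holomorphic_graph[OF \<open>open U\<close> _ P] regular by blast
  have "P \<noteq> {}" "connected P" "P \<subseteq> U"
    using P in_components_nonempty in_components_connected in_components_subset by blast+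
  then have J_eq: "fst ` P = {Inf (fst ` P)<..<Sup (fst ` P)}"
    using \<open>open (fst ` P)\<close> \<open>bounded U\<close>
    by (intro open_connected_bounded_eq_Ioo
        connected_continuous_image[OF continuous_on_fst[OF continuous_on_id]]
        bounded_linear_image[OF bounded_subset] bounded_linear_fst) auto
  have on_branch: "poly2 f x (g x) = 0 \<and> poly2 (pdx f) x (g x) \<noteq> 0 \<and> poly2 (pdy f) x (g x) \<noteq> 0"
    if "x \<in> fst ` P" for x
  proof -
    have mem: "(x, g x) \<in> zero_set f \<inter> U"
      using that P_eq \<open>P \<subseteq> U\<close> in_components_subset[OF P] by blast
    then show ?thesis
      using regular[OF mem] by (simp add: zero_set_def eval2_eq_poly2)
  qed
  show ?thesis
  proof (rule that)
    show "Inf (fst ` P) < Sup (fst ` P)"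
      using \<open>P \<noteq> {}\<close> J_eq by (metis greaterThanLessThan_empty_iff image_is_empty not_less)
    show "P = {(x, g x) | x. x \<in> {Inf (fst ` P)<..<Sup (fst ` P)}}"
      using P_eq unfolding J_eq[symmetric] setcompr_eq_image Collect_mem_eq .
    show "real_analytic_on g {Inf (fst ` P)<..<Sup (fst ` P)}"
      using locally_Re_holomorphic_imp_real_analytic[OF hol] unfolding J_eq[symmetric] .
    show "\<forall>x\<in>{Inf (fst ` P)<..<Sup (fst ` P)}. deriv g x \<noteq> 0"
      using branch_deriv_nonzero[OF \<open>open (fst ` P)\<close> hol] on_branch
      unfolding J_eq[symmetric] by blast
    show "finite {x. strict_inflection g {Inf (fst ` P)<..<Sup (fst ` P)} x}"
      using branch_finite_strict_inflections[OF \<open>open (fst ` P)\<close> hol _ _ \<open>irreducible f\<close>] on_branch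
      unfolding J_eq[symmetric] by blast
  qed
qed

theorem lemma2p6:
  fixes f :: "real poly poly" and q e :: "real \<times> real" and r :: real
    and P :: "(real \<times> real) set"
  assumes irr: "irreducible f"
    and cpt: "compact (zero_set f)"
    and conn: "connected (zero_set f)"
    and q_sing: "singular_point f q"
    and r_pos: "r > 0"
    and no_other_sing: "\<forall>p\<in>zero_set f \<inter> ball q r. p \<noteq> q \<longrightarrow> \<not> singular_point f p"
    and partials_nz: "\<forall>p\<in>zero_set f \<inter> cball q r. p \<noteq> q \<longrightarrow>
                         eval2 (pdx f) p \<noteq> 0 \<and> eval2 (pdy f) p \<noteq> 0"
    and P_comp: "P \<in> components (zero_set f \<inter> (ball q r - {q}))"
    and endpoints: "closure P - P = {q, e}"
    and e_bdry: "e \<in> sphere q r"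
  shows "\<exists>a b g. a < b \<and> P = {(x, g x) | x. x \<in> {a<..<b}} \<and>
           real_analytic_on g {a<..<b} \<and>
           (\<forall>x\<in>{a<..<b}. deriv g x \<noteq> 0) \<and>
           finite {x. strict_inflection g {a<..<b} x}"
proof -
  have regular: "eval2 (pdx f) p \<noteq> 0 \<and> eval2 (pdy f) p \<noteq> 0"
    if "p \<in> zero_set f \<inter> (ball q r - {q})" for p
    using partials_nz that by auto
  have "open (ball q r - {q})" "bounded (ball q r - {q})"
    by (auto intro: open_Diff bounded_subset[OF bounded_ball])
  then obtain a b g where "a < b" "P = {(x, g x) | x. x \<in> {a<..<b}}" "real_analytic_on g {a<..<b}"
    "\<forall>x\<in>{a<..<b}. deriv g x \<noteq> 0" "finite {x. strict_inflection g {a<..<b} x}"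
    by (rule regular_component_analytic_graph[OF irr _ _ regular P_comp])
  then show ?thesis
    by blast
qed

end
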